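(* Let $n\ge6$ be even, let $\varrho:G_n\to\mathcal L$ be a homomorphism and let $p,q\in\overline{\mathrm B}W$. Then $\mathrm{Area}_n(p,q;\varrho)=\mathrm{Area}_1(\varrho(w_1)q,\,p;\varrho)$.
   Context: Let $W$ be a 2-dimensional complex vector space with a hermitian form $\langle\cdot,\cdot\rangle$ of signature $(+,-)$. In $\mathbb{CP}W$ let $\mathrm BW$ be the negative points (the Poincaré disc, curvature $-1$, oriented by its complex structure), $\mathrm SW$ the isotropic points, $\overline{\mathrm B}W=\mathrm BW\cup\mathrm SW$; $\mathcal L=\mathrm{PU}(W)$ is the group of orientation-preserving isometries of $\mathrm BW$. Oriented triangle area: $\mathrm{Area}\,\Delta(p_1,p_2,p_3)=2\arg(-\langle p_1,p_2\rangle\langle p_2,p_3\rangle\langle p_3,p_1\rangle)$ ($\arg\in[-\pi,\pi]$) if no two vertices are equal isotropic points, $0$ otherwise. $\mathrm{Area}(p_1,\dots,p_m):=\sum_{k=1}^m\mathrm{Area}\,\Delta(c,p_k,p_{k+1})$ (indices mod $m$), independent of $c\in\overline{\mathrm B}W$. $H_n$ is the group generated by $r_1,\dots,r_n$ with relations $r_i^2=1$, $r_n\cdots r_1=1$, indices mod $n$; for even $n$, $G_n\le H_n$ is the index-2 subgroup of words of even length in the $r_i$. $S$ is the automorphism of $H_n$ with $Sr_i=r_{i+1}$ (it preserves $G_n$). Put $v_i:=r_i\cdots r_2r_1$ for $0\le i\le n-1$ ($v_0=1$); for $0\le i\le n-2$ put $w_i:=v_i$ if $i$ is even and $w_i:=v_ir_n$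 if $i$ is odd, and $w_{i+n-1}:=r_nw_ir_n$; indices of the $w_i$ are mod $2n-2$. All $w_i\in G_n$. For $x\in\overline{\mathrm B}W$ write $w_ix$ for $\varrho(w_i)x$. Define $\mathrm{Area}_n(p,q;\varrho):=\mathrm{Area}(w_0p,w_1q,w_2p,w_3q,\dots,w_{2n-4}p,w_{2n-3}q)$ (the $2n-2$ points $w_jx_j$, $x_j=p$ for even $j$, $x_j=q$ for odd $j$), and for $1\le i\le n$, $\mathrm{Area}_i(p,q;\varrho):=\mathrm{Area}_n(p,q;\varrho\circ S^i)$. *)

theory Defs
  imports "HOL-Analysis.Analysis"
begin

type_synonym cvec = "complex ^ 2"
type_synonym cmtx = "complex ^ 2 ^ 2"

definition herm :: "cvec \<Rightarrow> cvec \<Rightarrow> complex" where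
  "herm z w = z$1 * cnj (w$1) - z$2 * cnj (w$2)"

text \<open>Points of the closed ball (negative or isotropic points), given by
  nonzero representative vectors.\<close>
definition in_cball :: "cvec \<Rightarrow> bool" where
  "in_cball p \<longleftrightarrow> p \<noteq> 0 \<and> Re (herm p p) \<le> 0"

definition isotropic :: "cvec \<Rightarrow> bool" where
  "isotropic p \<longleftrightarrow> p \<noteq> 0 \<and> herm p p = 0"

text \<open>Equality of points of CP W.\<close>
definition proj_eq :: "cvec \<Rightarrow> cvec \<Rightarrow> bool" where
  "proj_eq p q \<longleftrightarrow> (\<exists>c. c \<noteq> 0 \<and> p = c *s q)"

definition tri_area :: "cvec \<Rightarrow> cvec \<Rightarrow> cvec \<Rightarrow> real" where
  "tri_area p1 p2 p3 =
     (if (isotropic p1 \<and> isotropic p2 \<and> proj_eq p1 p2) \<or>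
         (isotropic p2 \<and> isotropic p3 \<and> proj_eq p2 p3) \<or>
         (isotropic p3 \<and> isotropic p1 \<and> proj_eq p3 p1)
      then 0
      else 2 * Arg (- (herm p1 p2 * herm p2 p3 * herm p3 p1)))"

text \<open>Base point c (the centre of the disc); the polygon area does not depend on it.\<close>
definition cpt :: cvec where "cpt = vector [0, 1]"

definition poly_area :: "cvec list \<Rightarrow> real" where
  "poly_area ps = (\<Sum>k<length ps. tri_area cpt (ps ! k) (ps ! ((k + 1) mod length ps)))"

text \<open>Elements of U(W): matrices preserving the hermitian form.
  Elements of PU(W) are represented by such matrices up to scalars.\<close>
definition unitaryW :: "cmtx \<Rightarrow> bool" where
  "unitaryW A \<longleftrightarrow> (\<forall>z w. herm (A *v z) (A *v w) = herm z w)"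

definition mproj_eq :: "cmtx \<Rightarrow> cmtx \<Rightarrow> bool" where
  "mproj_eq A B \<longleftrightarrow> (\<exists>c::complex. c \<noteq> 0 \<and> A = (\<chi> i j. c * B$i$j))"

text \<open>Words in the generators r_1..r_n: the list [a1,...,ak] stands for r_a1 \<cdots> r_ak.\<close>
definition is_word :: "nat \<Rightarrow> nat list \<Rightarrow> bool" where
  "is_word n u \<longleftrightarrow> set u \<subseteq> {1..n}"

text \<open>Equality in H_n = <r_1..r_n | r_i^2 = 1, r_n \<cdots> r_1 = 1>.\<close>
inductive Heq :: "nat \<Rightarrow> nat list \<Rightarrow> nat list \<Rightarrow> bool" for n where
  Heq_refl: "Heq n u u"
| Heq_sym: "Heq n u v \<Longrightarrow> Heq n v u"
| Heq_trans: "Heq n u v \<Longrightarrow> Heq n v w \<Longrightarrow> Heq n u w"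
| Heq_sq: "i \<in> {1..n} \<Longrightarrow> Heq n (u @ v) (u @ [i, i] @ v)"
| Heq_rel: "Heq n (u @ v) (u @ rev [1..<n+1] @ v)"

text \<open>A homomorphism G_n \<rightarrow> PU(W), where G_n is the set of even-length words
  modulo Heq; rho is only relevant on even-length words.\<close>
definition is_hom_G :: "nat \<Rightarrow> (nat list \<Rightarrow> cmtx) \<Rightarrow> bool" where
  "is_hom_G n \<rho> \<longleftrightarrow>
     (\<forall>u. is_word n u \<and> even (length u) \<longrightarrow> unitaryW (\<rho> u)) \<and>
     mproj_eq (\<rho> []) (mat 1) \<and>
     (\<forall>u v. is_word n u \<and> even (length u) \<and> is_word n v \<and> even (length v) \<longrightarrow>
        mproj_eq (\<rho> (u @ v)) (\<rho> u ** \<rho> v)) \<and>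
     (\<forall>u v. is_word n u \<and> even (length u) \<and> is_word n v \<and> even (length v) \<and> Heq n u v \<longrightarrow>
        mproj_eq (\<rho> u) (\<rho> v))"

text \<open>The automorphism S: r_i \<mapsto> r_{i+1} (indices mod n, in 1..n); rho \<circ> S^i.\<close>
definition shiftgen :: "nat \<Rightarrow> nat \<Rightarrow> nat \<Rightarrow> nat" where
  "shiftgen n i j = ((j + n - 1 + i) mod n) + 1"

definition rho_S :: "nat \<Rightarrow> nat \<Rightarrow> (nat list \<Rightarrow> cmtx) \<Rightarrow> nat list \<Rightarrow> cmtx" where
  "rho_S n i \<rho> u = \<rho> (map (shiftgen n i) u)"

definition vw :: "nat \<Rightarrow> nat list" where
  "vw i = rev [1..<i+1]"   (* v_i = r_i \<cdots> r_2 r_1 *)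

definition ww0 :: "nat \<Rightarrow> nat \<Rightarrow> nat list" where
  "ww0 n i = (if even i then vw i else vw i @ [n])"   (* 0 \<le> i \<le> n-2 *)

definition ww :: "nat \<Rightarrow> nat \<Rightarrow> nat list" where
  "ww n j = (let i = j mod (2*n - 2) in
     if i < n - 1 then ww0 n i else [n] @ ww0 n (i - (n - 1)) @ [n])"

definition Area_n :: "nat \<Rightarrow> cvec \<Rightarrow> cvec \<Rightarrow> (nat list \<Rightarrow> cmtx) \<Rightarrow> real" where
  "Area_n n p q \<rho> =
     poly_area (map (\<lambda>j. \<rho> (ww n j) *v (if even j then p else q)) [0..<2*n - 2])"

definition Area_i :: "nat \<Rightarrow> nat \<Rightarrow> cvec \<Rightarrow> cvec \<Rightarrow> (nat list \<Rightarrow> cmtx) \<Rightarrow> real" where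
  "Area_i n i p q \<rho> = Area_n n p q (rho_S n i \<rho>)"

end

theory Submission
  imports Defs
begin

text \<open>Up to scalars, i.e. using only the relations of H_n, the polygon of
  Area_1(\<rho>(w_1) q, p) has the vertices P_1, ..., P_(n-1) of the polygon of Area_n(p, q) followed
  by the images of P_n, ..., P_(2n-2) = P_0 under the isometry T = \<rho>(w_1), and moreover T P_n = P_0
  and T P_(n-1) = P_1. Write both areas as sums over edges of Arg of triple products based at the
  centre of the disc. Moving the base point shows that T changes each edge term only by a
  coboundary g(a) - g(b), so along the T-image of a chain the sum telescopes; the two boundary
  terms that remain cancel against the edges P_0 P_1 and P_(n-1) P_n by antisymmetry.\<close>

section \<open>The hermitian form and points of CP W\<close>

lemma herm_commute: "herm b a = cnj (herm a b)"
  by (simp add: herm_def)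

lemma cnj_herm: "cnj (herm a b) = herm b a"
  by (simp add: herm_def)

lemma herm_smult_left: "herm (k *s a) b = k * herm a b"
  by (simp add: herm_def algebra_simps)

lemma herm_smult_right: "herm a (k *s b) = cnj k * herm a b"
  by (simp add: herm_def algebra_simps)

lemma herm_self_eq_of_real_Re: "herm a a = of_real (Re (herm a a))"
  by (simp add: herm_def complex_eq_iff)

lemma proj_eq_refl: "proj_eq a a"
  unfolding proj_eq_def by (intro exI[of _ 1]) simp

lemma proj_eq_sym: "proj_eq a b \<Longrightarrow> proj_eq b a"
  unfolding proj_eq_def
  by (metis nonzero_imp_inverse_nonzero vector_smult_assoc left_inverse vector_smult_lid)

lemma proj_eq_trans: "proj_eq a b \<Longrightarrow> proj_eq b c \<Longrightarrow> proj_eq a c"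
  unfolding proj_eq_def by (metis mult_eq_0_iff vector_smult_assoc)

lemma equivp_proj_eq: "equivp proj_eq"
  by (intro equivpI reflpI sympI transpI) (auto intro: proj_eq_refl proj_eq_sym proj_eq_trans)

lemma mproj_eq_imp_proj_eq:
  assumes "mproj_eq A B" shows "proj_eq (A *v x) (B *v x)"
proof -
  obtain c where c: "c \<noteq> 0" "A = (\<chi> i j. c * B$i$j)"
    using assms by (auto simp: mproj_eq_def)
  have "A *v x = c *s (B *v x)"
    unfolding c(2) by (simp add: vec_eq_iff matrix_vector_mult_def sum_distrib_left mult_ac)
  then show ?thesis using c(1) unfolding proj_eq_def by blast
qed

section \<open>Triple products\<close>

definition herm_triple :: "cvec \<Rightarrow> cvec \<Rightarrow> cvec \<Rightarrow> complex" where
  "herm_triple c a b = - (herm c a * herm a b * herm b c)"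

definition negative_point :: "cvec \<Rightarrow> bool" where
  "negative_point c \<longleftrightarrow> Re (herm c c) < 0"

definition det2 :: "cvec \<Rightarrow> cvec \<Rightarrow> complex" where
  "det2 x c = x$1 * c$2 - x$2 * c$1"

lemma negative_point_cpt: "negative_point cpt"
  by (simp add: negative_point_def cpt_def herm_def)

lemma negative_point_in_cball: "negative_point c \<Longrightarrow> in_cball c"
  by (auto simp: negative_point_def in_cball_def herm_def)

text \<open>In the coordinates x \<mapsto> (det2 x c, herm x c) adapted to a negative point c, the form
  becomes the standard one of signature (+,-), up to the positive factor -herm c c.\<close>
lemma herm_lagrange_identity:
  "- herm c c * herm a b = det2 a c * cnj (det2 b c) - herm a c * cnj (herm b c)"
  by (simp add: herm_def det2_def algebra_simps)

lemma neg_herm_self_eq_of_real: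
  assumes "negative_point c"
  obtains m where "- herm c c = of_real m" "m > 0"
proof
  show "- herm c c = of_real (- Re (herm c c))" by (subst herm_self_eq_of_real_Re) simp
  show "- Re (herm c c) > 0" using assms by (simp add: negative_point_def)
qed

lemma norm_det2_le_norm_herm:
  assumes c: "negative_point c" and x: "Re (herm x x) \<le> 0"
  shows "cmod (det2 x c) \<le> cmod (herm x c)"
proof -
  obtain m where m: "- herm c c = of_real m" "m > 0" using neg_herm_self_eq_of_real[OF c] .
  have e: "of_real m * herm x x = of_real ((cmod (det2 x c))\<^sup>2 - (cmod (herm x c))\<^sup>2)"
    unfolding of_real_diff complex_norm_square m(1)[symmetric] by (rule herm_lagrange_identity)
  have "m * Re (herm x x) = (cmod (det2 x c))\<^sup>2 - (cmod (herm x c))\<^sup>2"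
    using arg_cong[OF e, of Re] by simp
  moreover have "m * Re (herm x x) \<le> 0" using m(2) x by (simp add: mult_nonneg_nonpos)
  ultimately show ?thesis by (simp add: power2_le_iff_abs_le)
qed

lemma herm_negative_point_nonzero:
  assumes c: "negative_point c" and a: "in_cball a"
  shows "herm a c \<noteq> 0"
proof
  assume h: "herm a c = 0"
  have d: "det2 a c = 0"
    using norm_det2_le_norm_herm[OF c, of a] a h by (simp add: in_cball_def)
  have "herm c c \<noteq> 0" using c by (auto simp: negative_point_def)
  moreover have "- herm c c * a$1 = cnj (c$2) * det2 a c - c$1 * herm a c"
    and "- herm c c * a$2 = cnj (c$1) * det2 a c - c$2 * herm a c"
    by (simp_all add: herm_def det2_def algebra_simps)
  ultimately have "a$1 = 0" "a$2 = 0" using d h by simp_all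
  then have "a = 0" by (simp add: vec_eq_iff forall_2)
  then show False using a by (simp add: in_cball_def)
qed

lemma of_real_minus_eq_0_or_Re_pos:
  assumes "cmod w \<le> r"
  shows "of_real r - w = 0 \<or> Re (of_real r - w) > 0"
proof (cases "Re w = r")
  case True
  then have "cmod w = Re w" using assms complex_Re_le_cmod[of w] by linarith
  then have "Im w = 0" using cmod_power2[of w] by simp
  then show ?thesis using True by (simp add: complex_eq_iff)
next
  case False
  then show ?thesis using assms complex_Re_le_cmod[of w] by simp
qed

text \<open>That is, a triangle with a negative vertex has area in (-\<pi>, \<pi>); this is what makes Arg
  additive in the change of base point below.\<close>
lemma herm_triple_eq_0_or_Re_pos:
  assumes c: "negative_point c" and a: "Re (herm a a) \<le> 0" and b: "Re (herm b b) \<le> 0"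
  shows "herm_triple c a b = 0 \<or> Re (herm_triple c a b) > 0"
proof -
  obtain m where m: "- herm c c = of_real m" "m > 0" using neg_herm_self_eq_of_real[OF c] .
  define w where "w = cnj (herm a c) * herm b c * det2 a c * cnj (det2 b c)"
  define r where "r = (cmod (herm a c) * cmod (herm b c))\<^sup>2"
  have "- herm c c * herm_triple c a b = of_real r - w"
  proof -
    have "- herm c c * herm_triple c a b = - (herm c a * (- herm c c * herm a b) * herm b c)"
      by (simp add: herm_triple_def algebra_simps)
    also have "\<dots> = of_real r - w"
      unfolding herm_lagrange_identity r_def w_def power_mult_distrib of_real_mult
        complex_norm_square
      by (simp add: cnj_herm algebra_simps)
    finally show ?thesis .
  qed
  moreover have "cmod w \<le> r"
  proof -
    have "cmod (det2 a c) * cmod (det2 b c) \<le> cmod (herm a c) * cmod (herm b c)"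
      using norm_det2_le_norm_herm[OF c] a b by (simp add: mult_mono)
    then show ?thesis
      by (simp add: w_def r_def norm_mult power2_eq_square mult_left_mono mult.assoc)
  qed
  ultimately have "of_real m * herm_triple c a b = 0 \<or> Re (of_real m * herm_triple c a b) > 0"
    using of_real_minus_eq_0_or_Re_pos m(1) by metis
  then show ?thesis using m(2) by (auto simp: zero_less_mult_iff)
qed

lemma herm_triple_nonzero:
  assumes "negative_point c" "in_cball a" "in_cball b" "herm a b \<noteq> 0"
  shows "herm_triple c a b \<noteq> 0"
  using assms herm_negative_point_nonzero[of c a] herm_negative_point_nonzero[of c b]
  by (simp add: herm_triple_def herm_commute[of c a])

lemma norm_fst_le_norm_snd: "in_cball a \<Longrightarrow> cmod (a$1) \<le> cmod (a$2)"
  using norm_det2_le_norm_herm[OF negative_point_cpt, of a]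
  by (simp add: in_cball_def det2_def herm_def cpt_def)

lemma in_cball_snd_nonzero: "in_cball a \<Longrightarrow> a$2 \<noteq> 0"
  using norm_fst_le_norm_snd[of a] by (auto simp: in_cball_def vec_eq_iff forall_2)

lemma in_cball_herm_eq_0_proj_eq:
  assumes a: "in_cball a" and b: "in_cball b" and h: "herm a b = 0"
  shows "proj_eq a b"
proof -
  have a2: "a$2 \<noteq> 0" and b2: "b$2 \<noteq> 0" using a b by (simp_all add: in_cball_snd_nonzero)
  have hab: "a$1 * cnj (b$1) = a$2 * cnj (b$2)" using h by (simp add: herm_def)
  then have prod: "cmod (a$1) * cmod (b$1) = cmod (a$2) * cmod (b$2)"
    by (metis complex_mod_cnj norm_mult)
  have "cmod (b$1) = cmod (b$2)"
  proof (rule ccontr)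
    assume "cmod (b$1) \<noteq> cmod (b$2)"
    then have "cmod (b$1) < cmod (b$2)" using norm_fst_le_norm_snd[OF b] by simp
    then have "cmod (a$2) * cmod (b$1) < cmod (a$2) * cmod (b$2)" using a2 by simp
    moreover have "cmod (a$1) * cmod (b$1) \<le> cmod (a$2) * cmod (b$1)"
      using norm_fst_le_norm_snd[OF a] by (simp add: mult_right_mono)
    ultimately show False using prod by linarith
  qed
  then have "b$1 * cnj (b$1) = b$2 * cnj (b$2)" by (metis complex_norm_square)
  then have "(a$1 * b$2) * cnj (b$2) = (a$2 * b$1) * cnj (b$2)"
    using hab by (metis mult.assoc mult.commute)
  then have "a$1 * b$2 = a$2 * b$1" using b2 by simp
  then have "a = (a$2 / b$2) *s b" using b2 by (simp add: vec_eq_iff forall_2 field_simps)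
  then show ?thesis unfolding proj_eq_def using a2 b2 by (intro exI[of _ "a$2 / b$2"]) simp
qed

lemma herm_triple_smult_left: "herm_triple c (k *s a) b = of_real ((cmod k)\<^sup>2) * herm_triple c a b"
  unfolding complex_norm_square
  by (simp add: herm_triple_def herm_smult_left herm_smult_right algebra_simps)

lemma herm_triple_smult_right: "herm_triple c a (k *s b) = of_real ((cmod k)\<^sup>2) * herm_triple c a b"
  unfolding complex_norm_square
  by (simp add: herm_triple_def herm_smult_left herm_smult_right algebra_simps)

lemma Arg_herm_triple_proj_eq:
  assumes "proj_eq a a'" "proj_eq b b'"
  shows "Arg (herm_triple c a b) = Arg (herm_triple c a' b')"
proof -
  obtain k l where "k \<noteq> 0" "l \<noteq> 0" "a = k *s a'" "b = l *s b'"
    using assms by (auto simp: proj_eq_def)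
  then have "herm_triple c a b = of_real ((cmod k)\<^sup>2 * (cmod l)\<^sup>2) * herm_triple c a' b'"
    by (simp add: herm_triple_smult_left herm_triple_smult_right)
  then show ?thesis using \<open>k \<noteq> 0\<close> \<open>l \<noteq> 0\<close> by (simp only:) (rule Arg_times_of_real, simp)
qed

lemma Arg_mult_Re_pos: "Re z > 0 \<Longrightarrow> Re w > 0 \<Longrightarrow> Arg (z * w) = Arg z + Arg w"
  using Arg_Re_pos[of z] Arg_Re_pos[of w] by (intro Arg_times) auto

text \<open>The area of a polygon does not depend on the base point; this is the relation for a
  single edge.\<close>
lemma Arg_herm_triple_change_base:
  assumes c: "negative_point c" and c': "negative_point c'" and a: "in_cball a" and b: "in_cball b"
  shows "Arg (herm_triple c' a b) =
    Arg (herm_triple c a b) + Arg (herm_triple c c' a) - Arg (herm_triple c c' b)"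
proof (cases "herm a b = 0")
  case True
  then have "Arg (herm_triple c c' a) = Arg (herm_triple c c' b)"
    by (intro Arg_herm_triple_proj_eq proj_eq_refl in_cball_herm_eq_0_proj_eq a b)
  moreover have "herm_triple c' a b = 0" "herm_triple c a b = 0" using True by (simp_all add: herm_triple_def)
  ultimately show ?thesis by (simp add: Arg_zero)
next
  case False
  have cc': "in_cball c'" using c' by (rule negative_point_in_cball)
  have nz: "herm_triple c' a b \<noteq> 0" "herm_triple c a b \<noteq> 0"
    "herm_triple c c' a \<noteq> 0" "herm_triple c c' b \<noteq> 0"
    using herm_triple_nonzero[OF c' a b False] herm_triple_nonzero[OF c a b False]
      herm_triple_nonzero[OF c cc'] herm_negative_point_nonzero[OF c' a]
      herm_negative_point_nonzero[OF c' b] herm_commute[of c' a] herm_commute[of c' b] a b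
    by auto
  have Re_pos: "Re (herm_triple c' a b) > 0" "Re (herm_triple c a b) > 0"
    "Re (herm_triple c c' a) > 0" "Re (herm_triple c c' b) > 0"
    using herm_triple_eq_0_or_Re_pos[OF c'] herm_triple_eq_0_or_Re_pos[OF c] a b cc' nz
    by (auto simp: in_cball_def)
  define r where "r = (cmod (herm c a) * cmod (herm c b) * cmod (herm c c'))\<^sup>2"
  define r' where "r' = (cmod (herm_triple c c' b))\<^sup>2"
  have "herm c a \<noteq> 0" "herm c b \<noteq> 0" "herm c c' \<noteq> 0"
    using herm_negative_point_nonzero[OF c] a b cc' herm_commute[of _ c] by (metis complex_cnj_zero_iff)+
  then have "r > 0" unfolding r_def by simp
  moreover have "r' > 0" unfolding r'_def using nz by simp
  moreover have "(herm_triple c' a b * herm_triple c c' b) * of_real r =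
      (herm_triple c a b * herm_triple c c' a) * of_real r'"
    unfolding r_def r'_def power_mult_distrib of_real_mult complex_norm_square
    by (simp add: herm_triple_def cnj_herm algebra_simps)
  ultimately have "Arg (herm_triple c' a b * herm_triple c c' b) =
      Arg (herm_triple c a b * herm_triple c c' a)"
    by (metis Arg_times_of_real mult.commute)
  then show ?thesis using Re_pos by (simp add: Arg_mult_Re_pos)
qed

lemma Arg_herm_triple_swap:
  assumes c: "negative_point c" and a: "in_cball a" and b: "in_cball b"
  shows "Arg (herm_triple c b a) = - Arg (herm_triple c a b)"
proof -
  have swap: "herm_triple c b a = cnj (herm_triple c a b)"
    by (simp add: herm_triple_def cnj_herm mult_ac)
  have "herm_triple c a b = 0 \<or> Re (herm_triple c a b) > 0"
    using herm_triple_eq_0_or_Re_pos[OF c] a b by (simp add: in_cball_def)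
  then have "Arg (herm_triple c a b) = 0" if "herm_triple c a b \<in> \<real>"
    using that by (auto simp: Arg_eq_0 Arg_zero)
  then show ?thesis unfolding swap by (cases "herm_triple c a b \<in> \<real>") (simp_all add: Arg_cnj)
qed

lemma tri_area_eq_Arg_herm_triple:
  assumes c: "negative_point c" and a: "in_cball a" and b: "in_cball b"
  shows "tri_area c a b = 2 * Arg (herm_triple c a b)"
proof (cases "isotropic a \<and> isotropic b \<and> proj_eq a b")
  case True
  then obtain k where "a = k *s b" unfolding proj_eq_def by blast
  then have "herm_triple c a b = 0"
    using True by (simp add: herm_triple_def herm_smult_left isotropic_def)
  then show ?thesis using True by (simp add: tri_area_def Arg_zero)
next
  case False
  moreover have "\<not> isotropic c" using c by (auto simp: negative_point_def isotropic_def)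
  ultimately show ?thesis by (auto simp: tri_area_def herm_triple_def)
qed

section \<open>Isometries\<close>

lemma unitaryW_kernel:
  assumes T: "unitaryW T" "T *v x = 0" shows "x = 0"
proof -
  have "herm x y = herm (T *v x) (T *v y)" for y using T(1) by (simp add: unitaryW_def)
  then have "herm x y = 0" for y using T(2) by (simp add: herm_def)
  from this[of "vector [1,0]"] this[of "vector [0,1]"] show "x = 0"
    by (simp add: herm_def vec_eq_iff forall_2)
qed

lemma unitaryW_surj:
  assumes "unitaryW T" shows "\<exists>x. T *v x = y"
proof -
  have "inj ((*v) T)"
    using unitaryW_kernel[OF assms]
    by (intro injI) (metis matrix_vector_mult_diff_distrib eq_iff_diff_eq_0)
  then obtain B where "B ** T = mat 1" using matrix_left_invertible_injective by blast
  then have "T ** B = mat 1" using matrix_left_right_inverse by blast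
  then have "T *v (B *v y) = y" by (metis matrix_vector_mul_assoc matrix_vector_mul_lid)
  then show ?thesis by blast
qed

lemma unitaryW_in_cball: "unitaryW T \<Longrightarrow> in_cball x \<Longrightarrow> in_cball (T *v x)"
  using unitaryW_kernel unfolding in_cball_def unitaryW_def by metis

lemma herm_triple_unitaryW:
  "unitaryW T \<Longrightarrow> herm_triple (T *v c) (T *v a) (T *v b) = herm_triple c a b"
  by (simp add: herm_triple_def unitaryW_def)

text \<open>By invariance, the triple product based at cpt of T a and T b is the one based at
  T\<inverse> cpt of a and b; moving the base point back to cpt costs only a coboundary.\<close>
lemma Arg_herm_triple_unitaryW:
  assumes "unitaryW T"
  obtains g where "\<And>a b. in_cball a \<Longrightarrow> in_cball b \<Longrightarrow>
     Arg (herm_triple cpt (T *v a) (T *v b)) = Arg (herm_triple cpt a b) + g a - g b"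
proof -
  obtain c where c: "T *v c = cpt" using unitaryW_surj[OF assms] by blast
  have "negative_point c"
    using negative_point_cpt assms unfolding negative_point_def unitaryW_def c[symmetric] by metis
  then show ?thesis
    using that[of "\<lambda>x. Arg (herm_triple cpt c x)"] Arg_herm_triple_change_base[OF negative_point_cpt]
      herm_triple_unitaryW[OF assms, of c] c by metis
qed

section \<open>Edge sums of closed polygons\<close>

lemma poly_area_eq_sum_Arg_herm_triple:
  assumes "\<And>k. k < L \<Longrightarrow> in_cball (X k)" "L > 0"
  shows "poly_area (map X [0..<L]) = 2 * (\<Sum>k<L. Arg (herm_triple cpt (X k) (X (Suc k mod L))))"
  unfolding poly_area_def sum_distrib_left using assms
  by (intro sum.cong) (simp_all add: tri_area_eq_Arg_herm_triple negative_point_cpt)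

lemma sum_lessThan_Suc_mod:
  "(\<Sum>k<Suc N. G k (Suc k mod Suc N)) = (\<Sum>k<N. G k (Suc k)) + G N 0"
  by simp

lemma sum_twisted_telescope:
  fixes F :: "'a \<Rightarrow> 'a \<Rightarrow> real"
  assumes twist: "\<And>a b. a \<in> S \<Longrightarrow> b \<in> S \<Longrightarrow> F (t a) (t b) = F a b + g a - g b"
    and X: "\<And>k. X k \<in> S" and "i \<le> j"
  shows "(\<Sum>k\<in>{i..<j}. F (t (X k)) (t (X (Suc k)))) =
    (\<Sum>k\<in>{i..<j}. F (X k) (X (Suc k))) + g (X i) - g (X j)"
  using \<open>i \<le> j\<close> by (induction j rule: dec_induct) (simp_all add: twist X)

lemma sum_edges_related:
  fixes F :: "'a \<Rightarrow> 'a \<Rightarrow> real"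
  assumes F_R: "\<And>a a' b b'. R a a' \<Longrightarrow> R b b' \<Longrightarrow> F a b = F a' b'"
    and QY: "\<And>k. i \<le> k \<Longrightarrow> k \<le> j \<Longrightarrow> R (Q k) (Y (Suc k))"
  shows "(\<Sum>k\<in>{i..<j}. F (Q k) (Q (Suc k))) = (\<Sum>k\<in>{Suc i..<Suc j}. F (Y k) (Y (Suc k)))"
  unfolding sum.shift_bounds_Suc_ivl by (intro sum.cong refl F_R QY) auto

lemma sum_cycle_eq_twisted_rotation:
  fixes F :: "'a \<Rightarrow> 'a \<Rightarrow> real" and P Q :: "nat \<Rightarrow> 'a"
  assumes R: "equivp R" and F_R: "\<And>a a' b b'. R a a' \<Longrightarrow> R b b' \<Longrightarrow> F a b = F a' b'"
    and anti: "\<And>a b. a \<in> S \<Longrightarrow> b \<in> S \<Longrightarrow> F b a = - F a b"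
    and twist: "\<And>a b. a \<in> S \<Longrightarrow> b \<in> S \<Longrightarrow> F (t a) (t b) = F a b + g a - g b"
    and P: "\<And>k. P k \<in> S" and P_L: "P L = P 0" and m: "0 < m" "m < L"
    and Q_lo: "\<And>k. k < m \<Longrightarrow> R (Q k) (P (Suc k))"
    and Q_hi: "\<And>k. m \<le> k \<Longrightarrow> k < L \<Longrightarrow> R (Q k) (t (P (Suc k)))"
    and t_P_Suc_m: "R (t (P (Suc m))) (P 0)" and t_P_m: "R (t (P m)) (P 1)"
  shows "(\<Sum>k<L. F (Q k) (Q (Suc k mod L))) = (\<Sum>k<L. F (P k) (P (Suc k mod L)))"
proof -
  define chain where "chain X i j = (\<Sum>k\<in>{i..<j}. F (X k) (X (Suc k)))" for X i j
  have chain_split: "chain X i k = chain X i j + chain X j k" if "i \<le> j" "j \<le> k" for X i j k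
    unfolding chain_def using that by (simp add: sum.atLeastLessThan_concat)
  have chain_Suc: "chain X i j = F (X i) (X (Suc i)) + chain X (Suc i) j" if "i < j" for X i j
    unfolding chain_def using that by (simp add: sum.atLeast_Suc_lessThan)
  obtain N where N: "L = Suc N" using m by (cases L) auto
  have Q_sum: "(\<Sum>k<L. F (Q k) (Q (Suc k mod L))) =
      chain Q 0 (m - 1) + F (Q (m - 1)) (Q m) + chain Q m N + F (Q N) (Q 0)"
    using m N chain_split[of 0 "m - 1" N Q] chain_Suc[of "m - 1" N Q]
    unfolding N sum_lessThan_Suc_mod by (simp add: chain_def atLeast0LessThan)
  have P_sum: "(\<Sum>k<L. F (P k) (P (Suc k mod L))) =
      F (P 0) (P 1) + chain P 1 m + F (P m) (P (Suc m)) + chain P (Suc m) L"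
    using m N P_L chain_split[of 1 m L P] chain_Suc[of 0 L P] chain_Suc[of m L P]
    unfolding N sum_lessThan_Suc_mod by (simp add: chain_def atLeast0LessThan)
  have Q_first: "chain Q 0 (m - 1) = chain P 1 m"
    unfolding chain_def using m sum_edges_related[of R F 0 "m - 1" Q P] F_R Q_lo by simp
  have Q_hinge: "F (Q (m - 1)) (Q m) = F (P m) (P 0)"
    using F_R[OF Q_lo equivp_transp[OF R Q_hi t_P_Suc_m]] m by simp
  have Q_last: "chain Q m N = chain P (Suc m) L + g (P (Suc m)) - g (P L)"
  proof -
    have "chain Q m N = (\<Sum>k\<in>{Suc m..<L}. F (t (P k)) (t (P (Suc k))))"
      unfolding chain_def N using sum_edges_related[of R F m N Q "\<lambda>k. t (P k)"] F_R Q_hi N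
      by simp
    also have "\<dots> = chain P (Suc m) L + g (P (Suc m)) - g (P L)"
      unfolding chain_def using m
      by (intro sum_twisted_telescope[where F = F and t = t and g = g and X = P, OF twist P]) auto
    finally show ?thesis .
  qed
  have Q_closing: "F (Q N) (Q 0) = F (P 0) (P m) + g (P 0) - g (P m)"
  proof -
    have "R (Q 0) (P 1)" using Q_lo[OF m(1)] by simp
    then have "F (Q N) (Q 0) = F (t (P 0)) (t (P m))"
      using F_R[OF Q_hi[of N] equivp_transp[OF R _ equivp_symp[OF R t_P_m]]] m N P_L by simp
    then show ?thesis using twist P by simp
  qed
  have P_hinge: "F (P m) (P (Suc m)) = - F (P 0) (P 1) + g (P (Suc m)) - g (P m)"
  proof -
    have "F (t (P m)) (t (P (Suc m))) = F (P 1) (P 0)" using F_R[OF t_P_m t_P_Suc_m] .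
    then show ?thesis using twist[OF P P, of m "Suc m"] anti[OF P P, of 0 1] by simp
  qed
  show ?thesis
    using Q_sum P_sum Q_first Q_hinge Q_last Q_closing P_hinge anti[OF P P, of m 0] P_L by simp
qed

section \<open>Words in the generators\<close>

definition even_word :: "nat \<Rightarrow> nat list \<Rightarrow> bool" where
  "even_word n u \<longleftrightarrow> is_word n u \<and> even (length u)"

lemma even_word_append: "even_word n u \<Longrightarrow> even_word n v \<Longrightarrow> even_word n (u @ v)"
  by (auto simp: even_word_def is_word_def)

lemma even_word_Nil [simp]: "even_word n []"
  by (simp add: even_word_def is_word_def)

lemma is_hom_G_unitaryW: "is_hom_G n \<rho> \<Longrightarrow> even_word n u \<Longrightarrow> unitaryW (\<rho> u)"
  by (auto simp: is_hom_G_def even_word_def)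

lemma is_hom_G_Heq:
  assumes "is_hom_G n \<rho>" "even_word n u" "even_word n v" "Heq n u v"
  shows "proj_eq (\<rho> u *v x) (\<rho> v *v x)"
  using assms by (intro mproj_eq_imp_proj_eq) (auto simp: is_hom_G_def even_word_def)

lemma is_hom_G_compose:
  assumes "is_hom_G n \<rho>" "even_word n u" "even_word n v" "even_word n w" "Heq n (u @ v) w"
  shows "proj_eq (\<rho> u *v (\<rho> v *v x)) (\<rho> w *v x)"
proof -
  have "mproj_eq (\<rho> (u @ v)) (\<rho> u ** \<rho> v)"
    using assms(1-3) by (auto simp: is_hom_G_def even_word_def)
  then have "proj_eq (\<rho> (u @ v) *v x) (\<rho> u *v (\<rho> v *v x))"
    by (metis mproj_eq_imp_proj_eq matrix_vector_mul_assoc)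
  moreover have "proj_eq (\<rho> (u @ v) *v x) (\<rho> w *v x)"
    using is_hom_G_Heq[OF assms(1) even_word_append[OF assms(2,3)] assms(4,5)] .
  ultimately show ?thesis by (rule proj_eq_trans[OF proj_eq_sym])
qed

lemma Heq_append_context: "Heq n u v \<Longrightarrow> Heq n (a @ u @ b) (a @ v @ b)"
proof (induction rule: Heq.induct)
  case (Heq_sq i u v)
  then show ?case using Heq.Heq_sq[of i n "a @ u" "v @ b"] by simp
next
  case (Heq_rel u v)
  then show ?case using Heq.Heq_rel[of n "a @ u" "v @ b"] by simp
qed (blast intro: Heq.intros)+

lemma Heq_cancel: "i \<in> {1..n} \<Longrightarrow> Heq n (u @ [i, i] @ v) (u @ v)"
  by (rule Heq_sym) (rule Heq_sq)

lemma vw_Suc: "vw (Suc i) = Suc i # vw i"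
  by (simp add: vw_def)

lemma vw_Suc_eq_map_Suc: "vw (Suc i) = map Suc (vw i) @ [1]"
  by (induction i) (simp add: vw_def, metis vw_Suc list.simps(9) append_Cons)

lemma set_vw: "set (vw i) = {1..i}"
  by (auto simp: vw_def)

text \<open>r_n = r_(n-1) \<cdots> r_1, from r_n \<cdots> r_1 = 1 and r_n^2 = 1.\<close>
lemma Heq_last_vw: assumes "n \<ge> 1" shows "Heq n [n] (vw (n - 1))"
proof -
  have "rev [1..<n+1] = [n] @ vw (n - 1)"
    using assms by (cases n) (auto simp: vw_def)
  then have "Heq n [n] ([] @ [n, n] @ vw (n - 1))"
    using Heq_rel[of n "[n]" "[]"] by simp
  moreover have "Heq n ([] @ [n, n] @ vw (n - 1)) (vw (n - 1))"
    using Heq_cancel[of n n "[]" "vw (n - 1)"] assms by simp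
  ultimately show ?thesis by (rule Heq_trans)
qed

lemma shiftgen_1_less: "0 < x \<Longrightarrow> x < n \<Longrightarrow> shiftgen n (Suc 0) x = Suc x"
  by (simp add: shiftgen_def)

lemma shiftgen_1_self: "0 < n \<Longrightarrow> shiftgen n (Suc 0) n = Suc 0"
  by (simp add: shiftgen_def)

lemma map_shiftgen_vw: "i < n \<Longrightarrow> map (shiftgen n (Suc 0)) (vw i) = map Suc (vw i)"
  by (auto simp: set_vw shiftgen_1_less)

lemma even_word_map_shiftgen: "0 < n \<Longrightarrow> even_word n u \<Longrightarrow> even_word n (map (shiftgen n i) u)"
  by (auto simp: even_word_def is_word_def shiftgen_def Suc_le_eq)

lemma ww0_Suc:
  "i < n \<Longrightarrow> ww0 n (Suc i) = map (shiftgen n 1) (ww0 n i) @ (if even i then [1, n] else [])"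
  by (simp add: ww0_def vw_Suc_eq_map_Suc map_shiftgen_vw shiftgen_1_self)

lemma length_vw [simp]: "length (vw i) = i"
  by (simp add: vw_def)

lemma even_word_ww0: "i < n \<Longrightarrow> even_word n (ww0 n i)"
  by (auto simp: even_word_def is_word_def ww0_def set_vw)

lemma ww_eq_ww0: "j < n - 1 \<Longrightarrow> ww n j = ww0 n j"
  by (simp add: ww_def)

lemma ww_upper:
  assumes "i < n - 1" shows "ww n (n - 1 + i) = [n] @ ww0 n i @ [n]"
proof -
  have "(n - 1 + i) mod (2 * n - 2) = n - 1 + i" using assms by simp
  then show ?thesis unfolding ww_def Let_def by simp
qed

lemma ww_pred_self: "n \<ge> 2 \<Longrightarrow> ww n (n - 1) = [n, n]"
  using ww_upper[of 0 n] by (simp add: ww0_def vw_def)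

lemma ww_period: "n \<ge> 2 \<Longrightarrow> ww n (2 * n - 2) = []"
  by (simp add: ww_def ww0_def vw_def)

lemma ww_1: "n \<ge> 3 \<Longrightarrow> ww n 1 = [1, n]"
  by (simp add: ww_eq_ww0 ww0_def vw_def)

lemma even_word_ww:
  assumes "n \<ge> 2" shows "even_word n (ww n j)"
proof -
  define i where "i = j mod (2 * n - 2)"
  have "i < 2 * n - 2" using assms by (simp add: i_def)
  then have "even_word n (if i < n - 1 then ww0 n i else [n] @ ww0 n (i - (n - 1)) @ [n])"
    using assms even_word_ww0[of i n] even_word_ww0[of "i - (n - 1)" n]
    by (auto simp: even_word_def is_word_def)
  then show ?thesis by (simp add: ww_def Let_def i_def[symmetric])
qed

section \<open>The two polygons\<close>

locale rho_polygons =
  fixes n :: nat and \<rho> :: "nat list \<Rightarrow> cmtx" and p q :: cvec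
  assumes n_ge_6: "n \<ge> 6" and even_n: "even n" and hom: "is_hom_G n \<rho>"
    and p: "in_cball p" and q: "in_cball q"
begin

text \<open>T = \<rho>(w_1); P j and Q j are the vertices of the polygons of Area_n(p, q; \<rho>) and
  Area_1(T q, p; \<rho>), i.e. the latter computed for \<rho> \<circ> S.\<close>

definition T :: cmtx where
  "T = \<rho> [1, n]"

definition P :: "nat \<Rightarrow> cvec" where
  "P j = \<rho> (ww n j) *v (if even j then p else q)"

definition Q :: "nat \<Rightarrow> cvec" where
  "Q j = \<rho> (map (shiftgen n 1) (ww n j)) *v (if even j then T *v q else p)"

lemma even_word_1_n: "even_word n [1, n]"
  using n_ge_6 by (simp add: even_word_def is_word_def)

lemma even_word_1_ww0_n: "i < n \<Longrightarrow> even_word n ([1] @ ww0 n i @ [n])"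
  using even_word_ww0[of i n] n_ge_6 by (auto simp: even_word_def is_word_def)

lemma unitaryW_T: "unitaryW T"
  unfolding T_def by (rule is_hom_G_unitaryW[OF hom even_word_1_n])

lemma in_cball_P: "in_cball (P j)"
  unfolding P_def using n_ge_6 p q
  by (simp add: unitaryW_in_cball is_hom_G_unitaryW[OF hom even_word_ww])

lemma in_cball_Q: "in_cball (Q j)"
proof -
  have "even_word n (map (shiftgen n 1) (ww n j))"
    using n_ge_6 by (intro even_word_map_shiftgen even_word_ww) auto
  then show ?thesis
    unfolding Q_def using p q by (simp add: unitaryW_in_cball unitaryW_T is_hom_G_unitaryW[OF hom])
qed

lemma P_period: "P (2 * n - 2) = P 0"
  using n_ge_6 by (simp add: P_def ww_period ww_eq_ww0 ww0_def vw_def)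

lemma Heq_ww_ww0: assumes "j \<le> n - 1" shows "Heq n (ww n j) (ww0 n j)"
proof (cases "j < n - 1")
  case True
  then show ?thesis by (simp add: ww_eq_ww0 Heq_refl)
next
  case False
  then have j: "j = n - 1" using assms by simp
  have "ww n j = [n] @ [n]" "ww0 n j = vw (n - 1) @ [n]"
    unfolding j using n_ge_6 even_n ww_pred_self[of n] by (simp_all add: ww0_def)
  then show ?thesis
    using Heq_append_context[OF Heq_last_vw, of n "[]" "[n]"] n_ge_6 by simp
qed

lemma Q_proj_eq_P: assumes k: "k < n - 1" shows "proj_eq (Q k) (P (Suc k))"
proof -
  have S_ww: "map (shiftgen n 1) (ww n k) = map (shiftgen n 1) (ww0 n k)"
    using k by (simp add: ww_eq_ww0)
  have Q_k: "proj_eq (Q k) (\<rho> (ww0 n (Suc k)) *v (if even (Suc k) then p else q))"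
  proof (cases "even k")
    case True
    have "Heq n (map (shiftgen n 1) (ww0 n k) @ [1, n]) (ww0 n (Suc k))"
      using True k by (simp add: ww0_Suc Heq_refl)
    moreover have "even_word n (map (shiftgen n 1) (ww0 n k))" "even_word n (ww0 n (Suc k))"
      using k n_ge_6 by (auto intro!: even_word_map_shiftgen even_word_ww0)
    ultimately show ?thesis
      unfolding Q_def S_ww T_def using True is_hom_G_compose[OF hom _ even_word_1_n] by simp
  next
    case False
    then show ?thesis unfolding Q_def S_ww using k by (simp add: ww0_Suc proj_eq_refl)
  qed
  have "proj_eq (\<rho> (ww0 n (Suc k)) *v x) (\<rho> (ww n (Suc k)) *v x)" for x
    using k n_ge_6 Heq_sym[OF Heq_ww_ww0[of "Suc k"]]
    by (intro is_hom_G_Heq[OF hom] even_word_ww0 even_word_ww) auto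
  then show ?thesis unfolding P_def using proj_eq_trans[OF Q_k] by blast
qed

lemma Heq_T_ww_upper:
  assumes i: "i < n - 1" shows "Heq n ([1, n] @ ww n (n + i)) ([1] @ ww0 n (Suc i) @ [n])"
proof (cases "Suc i < n - 1")
  case True
  then have "ww n (n + i) = [n] @ ww0 n (Suc i) @ [n]"
    using ww_upper[of "Suc i" n] n_ge_6 by simp
  then show ?thesis using Heq_cancel[of n n "[1]" "ww0 n (Suc i) @ [n]"] n_ge_6 by simp
next
  case False
  then have Suc_i: "Suc i = n - 1" using i by simp
  then have "n + i = 2 * n - 2" using n_ge_6 by simp
  then have "[1, n] @ ww n (n + i) = [1] @ [n] @ []" using ww_period[of n] n_ge_6 by simp
  moreover have "[1] @ ww0 n (Suc i) @ [n] = ([1] @ vw (n - 1)) @ [n, n] @ []"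
    using Suc_i even_n n_ge_6 by (simp add: ww0_def)
  moreover have "Heq n (([1] @ vw (n - 1)) @ [n, n] @ []) (([1] @ vw (n - 1)) @ [])"
    by (rule Heq_cancel) (use n_ge_6 in simp)
  moreover have "Heq n (([1] @ vw (n - 1)) @ []) ([1] @ [n] @ [])"
    using Heq_append_context[OF Heq_sym[OF Heq_last_vw], of n "[1]" "[]"] n_ge_6 by simp
  ultimately show ?thesis using Heq_sym[OF Heq_trans] by metis
qed

lemma Q_proj_eq_T_P:
  assumes "n - 1 \<le> k" "k < 2 * n - 2" shows "proj_eq (Q k) (T *v P (Suc k))"
proof -
  define i where "i = k - (n - 1)"
  have i: "i < n - 1" and k: "k = n - 1 + i" and Suc_k: "Suc k = n + i"
    using assms n_ge_6 by (auto simp: i_def)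
  define w where "w = map (shiftgen n 1) (ww0 n i)"
  have S_ww: "map (shiftgen n 1) (ww n k) = [1] @ w @ [1]"
    unfolding k w_def using ww_upper[OF i] n_ge_6 by (simp add: shiftgen_def)
  have ww0_Suc_i: "ww0 n (Suc i) = w @ (if even i then [1, n] else [])"
    unfolding w_def using i by (simp add: ww0_Suc)
  have "even_word n (map (shiftgen n 1) (ww n k))"
    using n_ge_6 by (intro even_word_map_shiftgen even_word_ww) auto
  then have ev: "even_word n ([1] @ w @ [1])" "even_word n ([1] @ ww0 n (Suc i) @ [n])"
    using i by (simp_all only: S_ww even_word_1_ww0_n)
  have Q_k: "proj_eq (Q k) (\<rho> ([1] @ ww0 n (Suc i) @ [n]) *v (if even (Suc k) then p else q))"
  proof (cases "even i")
    case True
    then have "odd k" using even_n n_ge_6 k by simp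
    have "Heq n ([1] @ w @ [1]) ([1] @ ww0 n (Suc i) @ [n])"
      using Heq_sq[of n n "[1] @ w @ [1]" "[]"] True ww0_Suc_i n_ge_6 by simp
    then show ?thesis unfolding Q_def S_ww using \<open>odd k\<close> is_hom_G_Heq[OF hom ev] by simp
  next
    case False
    then have "even k" using even_n n_ge_6 k by simp
    have "Heq n (([1] @ w @ [1]) @ [1, n]) ([1] @ ww0 n (Suc i) @ [n])"
      using Heq_cancel[of 1 n "[1] @ w" "[n]"] False ww0_Suc_i n_ge_6 by simp
    then show ?thesis
      unfolding Q_def S_ww T_def using \<open>even k\<close> is_hom_G_compose[OF hom ev(1) even_word_1_n ev(2)]
      by simp
  qed
  have "proj_eq (T *v P (Suc k)) (\<rho> ([1] @ ww0 n (Suc i) @ [n]) *v (if even (Suc k) then p else q))"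
    unfolding T_def P_def Suc_k using n_ge_6
    by (intro is_hom_G_compose[OF hom even_word_1_n even_word_ww ev(2) Heq_T_ww_upper[OF i]]) simp
  then show ?thesis using proj_eq_trans[OF Q_k proj_eq_sym] by blast
qed

lemma T_P_self_proj_eq_P_0: "proj_eq (T *v P n) (P 0)"
proof -
  have "Heq n ([1] @ ww0 n 1 @ [n]) ([] @ [n, n] @ [])"
    using Heq_cancel[of 1 n "[]" "[n, n]"] n_ge_6 by (simp add: ww0_def vw_def)
  then have "Heq n ([1, n] @ ww n n) []"
    using Heq_trans[OF Heq_T_ww_upper[of 0] Heq_trans[OF _ Heq_cancel[of n n "[]" "[]"]]] n_ge_6
    by simp
  then have "proj_eq (\<rho> [1, n] *v (\<rho> (ww n n) *v p)) (\<rho> [] *v p)"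
    using n_ge_6 by (intro is_hom_G_compose[OF hom even_word_1_n even_word_ww even_word_Nil]) auto
  moreover have "ww n 0 = []" using n_ge_6 by (simp add: ww_eq_ww0 ww0_def vw_def)
  ultimately show ?thesis unfolding T_def P_def using even_n by simp
qed

lemma T_P_pred_proj_eq_P_1: "proj_eq (T *v P (n - 1)) (P 1)"
proof -
  have "Heq n ([1, n] @ [n, n]) [1, n]" using Heq_cancel[of n n "[1, n]" "[]"] n_ge_6 by simp
  then have "proj_eq (\<rho> [1, n] *v (\<rho> [n, n] *v q)) (\<rho> [1, n] *v q)"
    using n_ge_6
    by (intro is_hom_G_compose[OF hom even_word_1_n _ even_word_1_n]) (auto simp: even_word_def is_word_def)
  moreover have "odd (n - 1)" using even_n n_ge_6 by simp
  ultimately show ?thesis unfolding T_def P_def using n_ge_6 ww_pred_self[of n] ww_1[of n] by simp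
qed

lemma Area_n_eq_sum_Arg: "Area_n n p q \<rho> =
    2 * (\<Sum>k<2 * n - 2. Arg (herm_triple cpt (P k) (P (Suc k mod (2 * n - 2)))))"
  unfolding Area_n_def P_def[symmetric] using n_ge_6
  by (intro poly_area_eq_sum_Arg_herm_triple in_cball_P) simp

lemma Area_1_eq_sum_Arg: "Area_i n 1 (T *v q) p \<rho> =
    2 * (\<Sum>k<2 * n - 2. Arg (herm_triple cpt (Q k) (Q (Suc k mod (2 * n - 2)))))"
proof -
  have "Area_i n 1 (T *v q) p \<rho> = poly_area (map Q [0..<2 * n - 2])"
    unfolding Area_i_def Area_n_def rho_S_def Q_def ..
  then show ?thesis using n_ge_6 by (simp add: poly_area_eq_sum_Arg_herm_triple in_cball_Q)
qed

lemma sum_Arg_Q_eq_sum_Arg_P: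
  "(\<Sum>k<2 * n - 2. Arg (herm_triple cpt (Q k) (Q (Suc k mod (2 * n - 2))))) =
    (\<Sum>k<2 * n - 2. Arg (herm_triple cpt (P k) (P (Suc k mod (2 * n - 2)))))"
proof -
  obtain g where g: "\<And>a b. in_cball a \<Longrightarrow> in_cball b \<Longrightarrow>
      Arg (herm_triple cpt (T *v a) (T *v b)) = Arg (herm_triple cpt a b) + g a - g b"
    using Arg_herm_triple_unitaryW[OF unitaryW_T] by blast
  have m: "0 < n - 1" "n - 1 < 2 * n - 2" using n_ge_6 by simp_all
  have T_P: "proj_eq (T *v P (Suc (n - 1))) (P 0)" using T_P_self_proj_eq_P_0 n_ge_6 by simp
  show ?thesis
    by (rule sum_cycle_eq_twisted_rotation[where F = "\<lambda>a b. Arg (herm_triple cpt a b)"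
          and S = "Collect in_cball" and t = "(*v) T", OF equivp_proj_eq
          Arg_herm_triple_proj_eq Arg_herm_triple_swap[OF negative_point_cpt] g _
          P_period m Q_proj_eq_P Q_proj_eq_T_P T_P T_P_pred_proj_eq_P_1])
      (simp_all add: in_cball_P)
qed

end

theorem lemma5p5:
  fixes n :: nat and \<rho> :: "nat list \<Rightarrow> complex ^ 2 ^ 2" and p q :: "complex ^ 2"
  assumes "n \<ge> 6" and "even n"
    and "is_hom_G n \<rho>"
    and "in_cball p" and "in_cball q"
  shows "Area_n n p q \<rho> = Area_i n 1 (\<rho> (ww n 1) *v q) p \<rho>"
proof -
  interpret rho_polygons n \<rho> p q using assms by unfold_locales
  have "\<rho> (ww n 1) = T" using ww_1 assms(1) by (simp add: T_def)
  then show ?thesis using Area_n_eq_sum_Arg Area_1_eq_sum_Arg sum_Arg_Q_eq_sum_Arg_P by simp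
qed

end
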